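(* Let $S$ be a numerical semigroup with $\mathrm{l}(S)=2$. Then $\{\mathrm{F}(S),\mathrm{h}(S)\}\subseteq\mathrm{PF}(S)\subseteq\{\mathrm{F}(S),\mathrm{h}(S),\mathrm{F}(S)-\mathrm{h}(S)\}$. Moreover, $\mathrm{F}(S)-\mathrm{h}(S)\in\mathrm{PF}(S)$ if and only if $2\mathrm{h}(S)-\mathrm{F}(S)\notin S$.
   Context: A numerical semigroup is a subset $S\subseteq\mathbb{N}$ closed under addition with $0\in S$ and $\mathbb{N}\setminus S$ finite; $\mathrm{F}(S)=\max(\mathbb{Z}\setminus S)$. $\mathrm{N}(S)=\{s\in S\mid s<\mathrm{F}(S)\}$, $\mathrm{L}(S)=\{x\in\mathbb{N}\setminus S\mid \mathrm{F}(S)-x\notin \mathrm{N}(S)\}$, $\mathrm{l}(S)=\#\mathrm{L}(S)$. For $\mathrm{l}(S)\ge2$, $\mathrm{h}(S)=\max\{x\in\mathbb{N}\setminus S\mid \mathrm{F}(S)-x\in\mathbb{N}\setminus S,\ x\ne \mathrm{F}(S)/2\}$. $\mathrm{PF}(S)=\{x\in\mathbb{Z}\setminus S\mid x+s\in S \text{ for all } s\in S\setminus\{0\}\}$. *)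

theory Defs
  imports Main
begin

definition numerical_semigroup :: "int set \<Rightarrow> bool" where
  "numerical_semigroup S \<longleftrightarrow> S \<subseteq> {0..} \<and> 0 \<in> S \<and> (\<forall>a\<in>S. \<forall>b\<in>S. a + b \<in> S)
     \<and> finite ({0..} - S)"

definition Frob :: "int set \<Rightarrow> int" where
  "Frob S = (GREATEST x. x \<notin> S)"

definition Nset :: "int set \<Rightarrow> int set" where
  "Nset S = {s \<in> S. s < Frob S}"

definition Lset :: "int set \<Rightarrow> int set" where
  "Lset S = {x. 0 \<le> x \<and> x \<notin> S \<and> Frob S - x \<notin> Nset S}"

definition lnum :: "int set \<Rightarrow> nat" where
  "lnum S = card (Lset S)"

text \<open>x \<noteq> F/2 is written as 2x \<noteq> F (equivalent for integers).\<close>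
definition hnum :: "int set \<Rightarrow> int" where
  "hnum S = (GREATEST x. 0 \<le> x \<and> x \<notin> S \<and> 0 \<le> Frob S - x \<and> Frob S - x \<notin> S \<and> 2 * x \<noteq> Frob S)"

definition PF :: "int set \<Rightarrow> int set" where
  "PF S = {x. x \<notin> S \<and> (\<forall>s \<in> S - {0}. x + s \<in> S)}"

end

theory Submission
  imports Defs
begin

text \<open>
  Write \<open>F = F(S)\<close>. The set \<open>L(S)\<close> consists of the gaps \<open>x\<close> with \<open>F - x\<close> also a gap, so it is
  invariant under \<open>x \<mapsto> F - x\<close>; when it has two elements they are \<open>h\<close> and \<open>F - h\<close> with
  \<open>2h > F\<close>. Every pseudo-Frobenius number other than \<open>F\<close> lies in \<open>L(S)\<close>, and a gap
  \<open>x \<in> L(S)\<close> with \<open>x + s\<close> a gap for some \<open>s \<in> S\<close> forces \<open>x + s \<in> L(S)\<close>. Hence the maximum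
  \<open>h\<close> of \<open>L(S)\<close> is pseudo-Frobenius, and \<open>F - h\<close> fails to be so exactly when
  \<open>(F - h) + s = h\<close> for some nonzero \<open>s \<in> S\<close>, i.e. when \<open>2h - F \<in> S\<close>.
\<close>

lemma Frob_notin_and_greatest:
  assumes "numerical_semigroup S"
  shows "Frob S \<notin> S \<and> (\<forall>y. y \<notin> S \<longrightarrow> y \<le> Frob S)"
proof -
  have sub: "S \<subseteq> {0..}" and fin: "finite (insert (-1) ({0..} - S))"
    using assms unfolding numerical_semigroup_def by auto
  define M where "M = Max (insert (-1) ({0..} - S))"
  have "M \<in> insert (-1) ({0..} - S)" unfolding M_def using fin by (rule Max_in) simp
  then have "M \<notin> S" using sub by auto
  moreover have "y \<le> M" if "y \<notin> S" for y
  proof (cases "y < 0")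
    case True
    have "-1 \<le> M" unfolding M_def using fin by simp
    with True show ?thesis by simp
  next
    case False
    with that fin show ?thesis unfolding M_def by simp
  qed
  ultimately have "Frob S = M"
    unfolding Frob_def by (intro Greatest_equality) auto
  with \<open>M \<notin> S\<close> \<open>\<And>y. y \<notin> S \<Longrightarrow> y \<le> M\<close> show ?thesis by auto
qed

lemma Frob_notin: "numerical_semigroup S \<Longrightarrow> Frob S \<notin> S"
  using Frob_notin_and_greatest by blast

lemma le_Frob_if_notin: "numerical_semigroup S \<Longrightarrow> y \<notin> S \<Longrightarrow> y \<le> Frob S"
  using Frob_notin_and_greatest by blast

lemma numerical_semigroup_add:
  "numerical_semigroup S \<Longrightarrow> a \<in> S \<Longrightarrow> b \<in> S \<Longrightarrow> a + b \<in> S"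
  unfolding numerical_semigroup_def by blast

lemma numerical_semigroup_pos:
  "numerical_semigroup S \<Longrightarrow> s \<in> S \<Longrightarrow> s \<noteq> 0 \<Longrightarrow> 0 < s"
  unfolding numerical_semigroup_def by force

lemma Lset_notin: "x \<in> Lset S \<Longrightarrow> x \<notin> S"
  unfolding Lset_def by blast

lemma Lset_eq:
  assumes "numerical_semigroup S"
  shows "Lset S = {x. 0 \<le> x \<and> x \<notin> S \<and> Frob S - x \<notin> S}"
proof -
  have "0 \<in> S" using assms unfolding numerical_semigroup_def by blast
  then have "Frob S - x \<notin> S" if "0 \<le> x" "x \<notin> S" "Frob S - x \<notin> Nset S" for x
    using that unfolding Nset_def by (cases "x = 0") auto
  moreover have "Frob S - x \<notin> Nset S" if "Frob S - x \<notin> S" for x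
    using that unfolding Nset_def by blast
  ultimately show ?thesis unfolding Lset_def by blast
qed

lemma Lset_le_Frob:
  "numerical_semigroup S \<Longrightarrow> x \<in> Lset S \<Longrightarrow> 0 \<le> Frob S - x"
  using le_Frob_if_notin[of S x] by (auto simp: Lset_eq)

lemma Frob_diff_in_Lset:
  "numerical_semigroup S \<Longrightarrow> x \<in> Lset S \<Longrightarrow> Frob S - x \<in> Lset S"
  using Lset_le_Frob[of S x] by (auto simp: Lset_eq)

lemma add_in_Lset:
  assumes "numerical_semigroup S" "x \<in> Lset S" "s \<in> S" "s \<noteq> 0" "x + s \<notin> S"
  shows "x + s \<in> Lset S"
proof -
  have "Frob S - (x + s) \<notin> S"
  proof
    assume "Frob S - (x + s) \<in> S"
    then have "Frob S - x \<in> S"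
      using numerical_semigroup_add[OF assms(1) _ assms(3)] by fastforce
    with assms(1,2) show False by (simp add: Lset_eq)
  qed
  with assms show ?thesis
    using numerical_semigroup_pos[of S s] by (auto simp: Lset_eq)
qed

lemma Frob_in_PF: "numerical_semigroup S \<Longrightarrow> Frob S \<in> PF S"
  using Frob_notin[of S] le_Frob_if_notin[of S] numerical_semigroup_pos[of S]
  unfolding PF_def by force

lemma PF_subset_insert_Lset:
  assumes "numerical_semigroup S"
  shows "PF S \<subseteq> insert (Frob S) (Lset S)"
proof
  fix x assume x: "x \<in> PF S"
  show "x \<in> insert (Frob S) (Lset S)"
  proof (cases "x = Frob S")
    case False
    have "Frob S - x \<notin> S"
    proof
      assume "Frob S - x \<in> S"
      moreover have "Frob S - x \<noteq> 0" using False by simp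
      ultimately have "x + (Frob S - x) \<in> S" using x unfolding PF_def by blast
      with Frob_notin[OF assms] show False by simp
    qed
    moreover have "x \<notin> S" using x unfolding PF_def by blast
    ultimately show ?thesis
      using le_Frob_if_notin[OF assms, of "Frob S - x"] by (auto simp: Lset_eq assms)
  qed simp
qed

lemma Max_Lset_in_PF:
  assumes "numerical_semigroup S" "x \<in> Lset S" "\<forall>y\<in>Lset S. y \<le> x"
  shows "x \<in> PF S"
proof -
  have "x + s \<in> S" if "s \<in> S" "s \<noteq> 0" for s
    using add_in_Lset[OF assms(1,2) that] assms(3) numerical_semigroup_pos[OF assms(1) that]
    by force
  with assms(1,2) show ?thesis unfolding PF_def by (auto simp: Lset_eq)
qed

lemma Lset_card_two:
  assumes "numerical_semigroup S" "lnum S = 2"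
  obtains h where "Lset S = {h, Frob S - h}" "Frob S < 2 * h"
proof -
  obtain a b where ab: "Lset S = {a, b}" "a \<noteq> b"
    using assms(2) unfolding lnum_def by (auto simp: card_2_iff)
  have "Frob S - a \<in> {a, b}" "Frob S - b \<in> {a, b}"
    using Frob_diff_in_Lset[OF assms(1)] ab(1) by blast+
  with ab(2) have b: "b = Frob S - a" by auto
  with ab(2) consider "Frob S < 2 * a" | "Frob S < 2 * b" by linarith
  then show ?thesis
  proof cases
    case 1
    with ab(1) b show ?thesis by (intro that[of a]) auto
  next
    case 2
    with ab(1) b show ?thesis by (intro that[of b]) auto
  qed
qed

lemma hnum_eq:
  assumes "numerical_semigroup S" "Lset S = {h, Frob S - h}" "Frob S < 2 * h"
  shows "hnum S = h"
proof -
  have cond: "0 \<le> y \<and> y \<notin> S \<and> 0 \<le> Frob S - y \<and> Frob S - y \<notin> S \<and> 2 * y \<noteq> Frob S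
      \<longleftrightarrow> y \<in> Lset S \<and> 2 * y \<noteq> Frob S" for y
    using Lset_le_Frob[OF assms(1), of y] by (auto simp: Lset_eq assms(1))
  show ?thesis
    unfolding hnum_def cond by (rule Greatest_equality) (use assms(2,3) in auto)
qed

lemma Frob_diff_in_PF_iff:
  assumes S: "numerical_semigroup S" and L: "Lset S = {h, Frob S - h}" and h: "Frob S < 2 * h"
  shows "Frob S - h \<in> PF S \<longleftrightarrow> 2 * h - Frob S \<notin> S"
proof
  assume PF: "Frob S - h \<in> PF S"
  show "2 * h - Frob S \<notin> S"
  proof
    assume "2 * h - Frob S \<in> S"
    with h have "2 * h - Frob S \<in> S - {0}" by simp
    with PF have "Frob S - h + (2 * h - Frob S) \<in> S" unfolding PF_def by blast
    with L show False using Lset_notin[of h S] by simp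
  qed
next
  assume n: "2 * h - Frob S \<notin> S"
  have "Frob S - h + s \<in> S" if "s \<in> S" "s \<noteq> 0" for s
  proof (rule ccontr)
    assume "Frob S - h + s \<notin> S"
    moreover have "Frob S - h \<in> Lset S" using L by simp
    ultimately have "Frob S - h + s \<in> Lset S" using add_in_Lset[OF S _ that] by blast
    with L numerical_semigroup_pos[OF S that] have "s = 2 * h - Frob S" by auto
    with n that(1) show False by simp
  qed
  moreover have "Frob S - h \<notin> S" using L Lset_notin[of "Frob S - h" S] by simp
  ultimately show "Frob S - h \<in> PF S" unfolding PF_def by auto
qed

theorem proposition12:
  assumes "numerical_semigroup S" and "lnum S = 2"
  shows "{Frob S, hnum S} \<subseteq> PF S \<and> PF S \<subseteq> {Frob S, hnum S, Frob S - hnum S}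
         \<and> (Frob S - hnum S \<in> PF S \<longleftrightarrow> 2 * hnum S - Frob S \<notin> S)"
proof -
  obtain h where L: "Lset S = {h, Frob S - h}" and h: "Frob S < 2 * h"
    using Lset_card_two[OF assms] .
  have "hnum S = h" using hnum_eq[OF assms(1) L h] .
  moreover have "h \<in> PF S"
    using Max_Lset_in_PF[OF assms(1), of h] L h by auto
  moreover have "PF S \<subseteq> {Frob S, h, Frob S - h}"
    using PF_subset_insert_Lset[OF assms(1)] L by simp
  ultimately show ?thesis
    using Frob_in_PF[OF assms(1)] Frob_diff_in_PF_iff[OF assms(1) L h] by simp
qed

end
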